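(* Let $G$ be a graph with a good partition $(X,\mathcal{B})$ and let $P=(x_1,\dots,x_t)$ be a good permutation of $(X,\mathcal{B})$. Then for every $i\in[t]$ we have $\mathcal{A}^P_i\sqsubseteq\mathcal{B}$, and the graph $G[X\cup\mathsf{notmin}(x_i,\{x_i,\dots,x_t\},\mathcal{A}^P_{i-1})]$ is an $X$-interval graph.
   Context: Partitions are into nonempty blocks; $\mathcal{A}\sqsubseteq\mathcal{B}$ means every block of $\mathcal{A}$ is contained in a block of $\mathcal{B}$. $\mathsf{CC}(H)$ is the partition of $V(H)$ into vertex sets of connected components. For a maximal clique $X$ of a chordal graph $H$, $H$ is an $X$-interval graph if there is an ordering $(K_1,\dots,K_k,X)$ of all maximal cliques of $H$ ending with $X$ such that for each vertex the cliques containing it are consecutive. For $X\subseteq V(G)$, $Y\subseteq X$, a partition $\mathcal{B}$ of $V(G)\setminus X$, a block $B$ and $x\in Y$: $N(x)$ is minimal in $B$ for $Y$ if $N(x)\cap B\subseteq N(y)$ for all $y\in Y$; $x$ is removable from $Y$ for $\mathcal{B}$ if $N(x)$ is minimal for $Y$ in at least $|\mathcal{B}|-1$ blocks. A good partition of $G$ is a pair $(X,\mathcal{B})$, $X$ a maximal clique, $\mathcal{B}$ a partition of $V(G)\setminus X$, with (i) $\mathsf{CC}(G-X)\sqsubseteq\mathcal{B}$; (ii) $G[X\cup B]$ is an $X$-interval graph for all $B\in\mathcal{B}$; (iii) there is an ordering $(x_1,\dots,x_t)$ of $X$, called a good permutation of $(X,\mathcal{B})$, with each $x_i$ removable from $\{x_i,\dots,x_t\}$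 for $\mathcal{B}$. For $W\subseteq X$, $x\in W$ and a partition $\mathcal{A}$ of $V(G)\setminus X$, $\mathsf{notmin}(x,W,\mathcal{A})$ is the union of the blocks $A\in\mathcal{A}$ in which $N(x)$ is not minimal for $W$. For an ordering $P=(x_1,\dots,x_\ell)$ of a subset of $X$: $\mathcal{A}^P_0=\mathsf{CC}(G-X)$, and for $i\in[\ell]$, $\mathcal{A}^P_i$ is obtained from $\mathcal{A}^P_{i-1}$ by replacing the blocks contained in $\mathsf{notmin}(x_i,X\setminus\{x_1,\dots,x_{i-1}\},\mathcal{A}^P_{i-1})$ by their union (nothing changes if there are none). *)

theory Defs
  imports Main
begin

text \<open>Induced subgraphs G[S] are represented by the
vertex set S together with the same relation E (all notions below are relativised
to the given vertex set).\<close>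

definition simple_graph :: "'a set \<Rightarrow> ('a \<Rightarrow> 'a \<Rightarrow> bool) \<Rightarrow> bool" where
  "simple_graph V E \<longleftrightarrow> finite V \<and> (\<forall>x y. E x y \<longrightarrow> E y x) \<and> (\<forall>x. \<not> E x x)"

definition nbhd :: "'a set \<Rightarrow> ('a \<Rightarrow> 'a \<Rightarrow> bool) \<Rightarrow> 'a \<Rightarrow> 'a set" where
  "nbhd V E x = {y \<in> V. E x y}"

definition is_clique :: "'a set \<Rightarrow> ('a \<Rightarrow> 'a \<Rightarrow> bool) \<Rightarrow> 'a set \<Rightarrow> bool" where
  "is_clique V E K \<longleftrightarrow> K \<subseteq> V \<and> (\<forall>x\<in>K. \<forall>y\<in>K. x \<noteq> y \<longrightarrow> E x y)"

definition max_clique :: "'a set \<Rightarrow> ('a \<Rightarrow> 'a \<Rightarrow> bool) \<Rightarrow> 'a set \<Rightarrow> bool" where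
  "max_clique V E K \<longleftrightarrow> is_clique V E K \<and> (\<forall>K'. is_clique V E K' \<and> K \<subseteq> K' \<longrightarrow> K' = K)"

definition induced_cycle :: "'a set \<Rightarrow> ('a \<Rightarrow> 'a \<Rightarrow> bool) \<Rightarrow> 'a list \<Rightarrow> bool" where
  "induced_cycle V E cs \<longleftrightarrow> length cs \<ge> 4 \<and> distinct cs \<and> set cs \<subseteq> V \<and>
     (\<forall>i<length cs. \<forall>j<length cs. i \<noteq> j \<longrightarrow>
        (E (cs ! i) (cs ! j) \<longleftrightarrow> (j = Suc i mod length cs \<or> i = Suc j mod length cs)))"

definition chordal :: "'a set \<Rightarrow> ('a \<Rightarrow> 'a \<Rightarrow> bool) \<Rightarrow> bool" where
  "chordal V E \<longleftrightarrow> (\<nexists>cs. induced_cycle V E cs)"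

definition X_interval :: "'a set \<Rightarrow> ('a \<Rightarrow> 'a \<Rightarrow> bool) \<Rightarrow> 'a set \<Rightarrow> bool" where
  "X_interval V E X \<longleftrightarrow> chordal V E \<and> max_clique V E X \<and>
     (\<exists>Ks. distinct Ks \<and> set Ks = {K. max_clique V E K} \<and> Ks \<noteq> [] \<and> last Ks = X \<and>
        (\<forall>v\<in>V. \<forall>i j k. i \<le> j \<and> j \<le> k \<and> k < length Ks \<and> v \<in> Ks ! i \<and> v \<in> Ks ! k
              \<longrightarrow> v \<in> Ks ! j))"

definition is_partition :: "'a set set \<Rightarrow> 'a set \<Rightarrow> bool" where
  "is_partition \<P> S \<longleftrightarrow> \<Union>\<P> = S \<and> {} \<notin> \<P> \<and>
     (\<forall>A\<in>\<P>. \<forall>B\<in>\<P>. A \<noteq> B \<longrightarrow> A \<inter> B = {})"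

definition refines :: "'a set set \<Rightarrow> 'a set set \<Rightarrow> bool" (infix "\<sqsubseteq>" 50) where
  "\<A> \<sqsubseteq> \<B> \<longleftrightarrow> (\<forall>A\<in>\<A>. \<exists>B\<in>\<B>. A \<subseteq> B)"

definition reach :: "'a set \<Rightarrow> ('a \<Rightarrow> 'a \<Rightarrow> bool) \<Rightarrow> 'a \<Rightarrow> 'a \<Rightarrow> bool" where
  "reach V E = (\<lambda>u v. u \<in> V \<and> v \<in> V \<and> E u v)\<^sup>*\<^sup>*"

definition CC :: "'a set \<Rightarrow> ('a \<Rightarrow> 'a \<Rightarrow> bool) \<Rightarrow> 'a set set" where
  "CC V E = {{v \<in> V. reach V E u v} | u. u \<in> V}"

definition minimal_in :: "'a set \<Rightarrow> ('a \<Rightarrow> 'a \<Rightarrow> bool) \<Rightarrow> 'a \<Rightarrow> 'a set \<Rightarrow> 'a set \<Rightarrow> bool" where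
  "minimal_in V E x Y B \<longleftrightarrow> (\<forall>y\<in>Y. nbhd V E x \<inter> B \<subseteq> nbhd V E y)"

definition removable :: "'a set \<Rightarrow> ('a \<Rightarrow> 'a \<Rightarrow> bool) \<Rightarrow> 'a \<Rightarrow> 'a set \<Rightarrow> 'a set set \<Rightarrow> bool" where
  "removable V E x Y \<B> \<longleftrightarrow> card {B \<in> \<B>. minimal_in V E x Y B} \<ge> card \<B> - 1"

definition good_permutation :: "'a set \<Rightarrow> ('a \<Rightarrow> 'a \<Rightarrow> bool) \<Rightarrow> 'a set \<Rightarrow> 'a set set \<Rightarrow> 'a list \<Rightarrow> bool" where
  "good_permutation V E X \<B> P \<longleftrightarrow> distinct P \<and> set P = X \<and>
     (\<forall>i<length P. removable V E (P ! i) (set (drop i P)) \<B>)"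

definition good_partition :: "'a set \<Rightarrow> ('a \<Rightarrow> 'a \<Rightarrow> bool) \<Rightarrow> 'a set \<Rightarrow> 'a set set \<Rightarrow> bool" where
  "good_partition V E X \<B> \<longleftrightarrow> max_clique V E X \<and> is_partition \<B> (V - X) \<and>
     CC (V - X) E \<sqsubseteq> \<B> \<and>
     (\<forall>B\<in>\<B>. X_interval (X \<union> B) E X) \<and>
     (\<exists>P. good_permutation V E X \<B> P)"

definition notmin :: "'a set \<Rightarrow> ('a \<Rightarrow> 'a \<Rightarrow> bool) \<Rightarrow> 'a \<Rightarrow> 'a set \<Rightarrow> 'a set set \<Rightarrow> 'a set" where
  "notmin V E x W \<A> = \<Union>{A \<in> \<A>. \<not> minimal_in V E x W A}"

text \<open>Replace the blocks contained in M by their union (nothing changes if there are none).\<close>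
definition merge_blocks :: "'a set set \<Rightarrow> 'a set \<Rightarrow> 'a set set" where
  "merge_blocks \<A> M = (if {A \<in> \<A>. A \<subseteq> M} = {} then \<A>
      else (\<A> - {A \<in> \<A>. A \<subseteq> M}) \<union> {\<Union>{A \<in> \<A>. A \<subseteq> M}})"

text \<open>Aseq V E X P i = A^P_i (P is 0-indexed: x_i = P ! (i-1)).\<close>
primrec Aseq :: "'a set \<Rightarrow> ('a \<Rightarrow> 'a \<Rightarrow> bool) \<Rightarrow> 'a set \<Rightarrow> 'a list \<Rightarrow> nat \<Rightarrow> 'a set set" where
  "Aseq V E X P 0 = CC (V - X) E"
| "Aseq V E X P (Suc i) = merge_blocks (Aseq V E X P i)
      (notmin V E (P ! i) (X - set (take i P)) (Aseq V E X P i))"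

end

theory Submission
  imports Defs
begin

(* Minimality passes to subsets, and every block of A_(i-1) lies in a block of \<B>, so the
   blocks of A_(i-1) in which N(x_i) is not minimal all lie in one block B of \<B>; merging
   them keeps A_i a refinement of \<B>. Every block of A_(i-1) is a union of components of
   G - X, so notmin is closed under taking neighbours inside B. Hence the maximal cliques of
   G[X \<union> notmin] are exactly those of G[X \<union> B] contained in X \<union> notmin, and deleting
   all other cliques from an X-interval ordering for G[X \<union> B] gives one for G[X \<union> notmin]. *)

definition consecutive :: "('b \<Rightarrow> bool) \<Rightarrow> 'b list \<Rightarrow> bool" where
  "consecutive Q xs \<longleftrightarrow>
     (\<forall>i j k. i \<le> j \<and> j \<le> k \<and> k < length xs \<and> Q (xs ! i) \<and> Q (xs ! k) \<longrightarrow> Q (xs ! j))"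

lemma filter_conv_map_nth:
  "filter P xs = map ((!) xs) (filter (\<lambda>i. P (xs ! i)) [0..<length xs])"
  using filter_map[of P "(!) xs" "[0..<length xs]"] by (simp add: map_nth comp_def)

lemma consecutive_filter:
  assumes "consecutive Q xs"
  shows "consecutive Q (filter P xs)"
  unfolding consecutive_def
proof (intro allI impI)
  fix i j k
  assume ijk: "i \<le> j \<and> j \<le> k \<and> k < length (filter P xs) \<and>
    Q (filter P xs ! i) \<and> Q (filter P xs ! k)"
  define ns where "ns = filter (\<lambda>i. P (xs ! i)) [0..<length xs]"
  have xs': "filter P xs = map ((!) xs) ns"
    unfolding ns_def by (rule filter_conv_map_nth)
  have "sorted ns"
    unfolding ns_def by (simp add: sorted_wrt_filter)
  then have "ns ! i \<le> ns ! j" "ns ! j \<le> ns ! k"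
    using ijk by (auto simp: xs' intro: sorted_nth_mono)
  moreover have "ns ! k < length xs"
    using ijk nth_mem[of k ns] by (auto simp: xs' ns_def)
  moreover have nth: "filter P xs ! n = xs ! (ns ! n)" if "n \<le> k" for n
    using that ijk by (simp add: xs')
  then have "Q (xs ! (ns ! i))" "Q (xs ! (ns ! k))"
    using ijk nth[of i] nth[of k] by auto
  ultimately have "Q (xs ! (ns ! j))"
    using assms unfolding consecutive_def by blast
  then show "Q (filter P xs ! j)"
    using nth[of j] ijk by simp
qed

lemma X_interval_iff:
  "X_interval V E X \<longleftrightarrow> chordal V E \<and> max_clique V E X \<and>
     (\<exists>Ks. distinct Ks \<and> set Ks = {K. max_clique V E K} \<and> Ks \<noteq> [] \<and> last Ks = X \<and>
        (\<forall>v\<in>V. consecutive (\<lambda>K. v \<in> K) Ks))"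
  unfolding X_interval_def consecutive_def by blast

lemma induced_cycle_nonadjacent:
  assumes "induced_cycle V E cs"
  shows "\<not> E (cs ! 0) (cs ! 2)"
proof -
  have len: "length cs \<ge> 4"
    using assms by (simp add: induced_cycle_def)
  have "\<forall>i<length cs. \<forall>j<length cs. i \<noteq> j \<longrightarrow>
      (E (cs ! i) (cs ! j) \<longleftrightarrow> (j = Suc i mod length cs \<or> i = Suc j mod length cs))"
    using assms by (simp add: induced_cycle_def)
  moreover have "cs \<noteq> []"
    using len by auto
  ultimately show ?thesis
    using len by (auto dest: spec[of _ 0] dest!: spec[of _ 2])
qed

lemma clique_chordal:
  assumes "is_clique V E V"
  shows "chordal V E"
  unfolding chordal_def
proof
  assume "\<exists>cs. induced_cycle V E cs"
  then obtain cs where cycle: "induced_cycle V E cs" ..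
  then have len: "length cs \<ge> 4" and "distinct cs" "set cs \<subseteq> V"
    by (auto simp: induced_cycle_def)
  then have "cs ! 0 \<in> set cs" "cs ! 2 \<in> set cs"
    by (auto intro!: nth_mem)
  with \<open>set cs \<subseteq> V\<close> have "cs ! 0 \<in> V" "cs ! 2 \<in> V"
    by blast+
  moreover have "cs ! 0 \<noteq> cs ! 2"
    using \<open>distinct cs\<close> len by (subst nth_eq_iff_index_eq) auto
  ultimately have "E (cs ! 0) (cs ! 2)"
    using assms by (auto simp: is_clique_def)
  with induced_cycle_nonadjacent[OF cycle] show False ..
qed

lemma chordal_subset: "chordal V E \<Longrightarrow> U \<subseteq> V \<Longrightarrow> chordal U E"
  unfolding chordal_def induced_cycle_def by blast

lemma is_clique_subset: "is_clique V E K \<Longrightarrow> K \<subseteq> U \<Longrightarrow> is_clique U E K"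
  unfolding is_clique_def by blast

lemma max_clique_clique_iff: "is_clique V E V \<Longrightarrow> max_clique V E K \<longleftrightarrow> K = V"
  unfolding max_clique_def is_clique_def by blast

lemma X_interval_clique:
  assumes "is_clique K E K"
  shows "X_interval K E K"
  using assms clique_chordal max_clique_clique_iff[OF assms]
  by (auto simp: X_interval_iff consecutive_def intro!: exI[of _ "[K]"])

definition nbhd_closed :: "'a set \<Rightarrow> ('a \<Rightarrow> 'a \<Rightarrow> bool) \<Rightarrow> 'a set \<Rightarrow> bool" where
  "nbhd_closed V E A \<longleftrightarrow> (\<forall>u\<in>A. nbhd V E u \<subseteq> A)"

lemma nbhd_closed_Union: "(\<And>A. A \<in> \<A> \<Longrightarrow> nbhd_closed V E A) \<Longrightarrow> nbhd_closed V E (\<Union>\<A>)"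
  unfolding nbhd_closed_def by blast

lemma nbhd_closed_subset: "nbhd_closed V E A \<Longrightarrow> U \<subseteq> V \<Longrightarrow> nbhd_closed U E A"
  unfolding nbhd_closed_def nbhd_def by blast

lemma max_clique_restrict:
  assumes X: "max_clique V E X" and "X \<subseteq> U" "U \<subseteq> V"
    and closed: "nbhd_closed (V - X) E (U - X)"
  shows "max_clique U E K \<longleftrightarrow> max_clique V E K \<and> K \<subseteq> U"
proof
  assume K: "max_clique U E K"
  then have "is_clique V E K" "K \<subseteq> U"
    using \<open>U \<subseteq> V\<close> by (auto simp: max_clique_def is_clique_def)
  moreover have "K' = K" if K': "is_clique V E K'" "K \<subseteq> K'" for K'
  proof (cases "K \<subseteq> X")
    case True
    have "is_clique U E X"
      using X \<open>X \<subseteq> U\<close> by (auto simp: max_clique_def intro: is_clique_subset)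
    then have "K = X"
      using K True by (auto simp: max_clique_def)
    then show ?thesis
      using X K' by (auto simp: max_clique_def)
  next
    case False
    then obtain c where c: "c \<in> K" "c \<in> U - X"
      using \<open>K \<subseteq> U\<close> by blast
    have "K' \<subseteq> U"
    proof
      fix v
      assume "v \<in> K'"
      show "v \<in> U"
      proof (cases "v \<in> X \<or> v = c")
        case False
        with \<open>v \<in> K'\<close> K' c have "v \<in> nbhd (V - X) E c"
          by (auto simp: is_clique_def nbhd_def)
        with closed c show ?thesis
          by (auto simp: nbhd_closed_def)
      qed (use \<open>X \<subseteq> U\<close> c in auto)
    qed
    with K'(1) have "is_clique U E K'"
      by (rule is_clique_subset)
    with K K'(2) show ?thesis
      by (auto simp: max_clique_def)
  qed
  ultimately show "max_clique V E K \<and> K \<subseteq> U"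
    by (auto simp: max_clique_def)
next
  assume K: "max_clique V E K \<and> K \<subseteq> U"
  have "is_clique V E K'" if "is_clique U E K'" for K'
    using that \<open>U \<subseteq> V\<close> unfolding is_clique_def by blast
  with K show "max_clique U E K"
    unfolding max_clique_def by (blast intro: is_clique_subset)
qed

lemma X_interval_restrict:
  assumes "X_interval V E X" and "X \<subseteq> U" "U \<subseteq> V"
    and "nbhd_closed (V - X) E (U - X)"
  shows "X_interval U E X"
proof -
  from assms(1) obtain Ks where chordal: "chordal V E" and X: "max_clique V E X"
    and Ks: "distinct Ks" "set Ks = {K. max_clique V E K}" "last Ks = X"
    and cons: "\<forall>v\<in>V. consecutive (\<lambda>K. v \<in> K) Ks"
    unfolding X_interval_iff by blast
  note max_cliques = max_clique_restrict[OF X assms(2-4)]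
  define Ks' where "Ks' = filter (\<lambda>K. K \<subseteq> U) Ks"
  have set_Ks': "set Ks' = {K. max_clique U E K}"
    using Ks(2) by (auto simp: Ks'_def max_cliques)
  then have "X \<in> set Ks'" "Ks \<noteq> []"
    using X \<open>X \<subseteq> U\<close> by (auto simp: max_cliques Ks'_def)
  then have "last Ks' = X"
    unfolding Ks'_def using Ks(3) \<open>X \<subseteq> U\<close>
    by (metis append_butlast_last_id filter.simps filter_append last_snoc)
  moreover have "\<forall>v\<in>U. consecutive (\<lambda>K. v \<in> K) Ks'"
    using cons \<open>U \<subseteq> V\<close> by (auto simp: Ks'_def intro: consecutive_filter)
  moreover have "distinct Ks'"
    using Ks(1) by (simp add: Ks'_def)
  moreover have "Ks' \<noteq> []"
    using \<open>X \<in> set Ks'\<close> by auto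
  moreover have "max_clique U E X"
    using X \<open>X \<subseteq> U\<close> max_cliques by simp
  ultimately show ?thesis
    unfolding X_interval_iff using chordal_subset[OF chordal \<open>U \<subseteq> V\<close>] set_Ks' by blast
qed

lemma minimal_in_antimono: "minimal_in V E x W B \<Longrightarrow> A \<subseteq> B \<Longrightarrow> minimal_in V E x W A"
  unfolding minimal_in_def by blast

lemma removable_nonminimal_unique:
  assumes "finite \<B>" "removable V E x W \<B>" "B\<^sub>1 \<in> \<B>" "B\<^sub>2 \<in> \<B>"
    and "\<not> minimal_in V E x W B\<^sub>1" "\<not> minimal_in V E x W B\<^sub>2"
  shows "B\<^sub>1 = B\<^sub>2"
proof (rule ccontr)
  assume "B\<^sub>1 \<noteq> B\<^sub>2"
  have "{B \<in> \<B>. minimal_in V E x W B} \<subseteq> \<B> - {B\<^sub>1, B\<^sub>2}"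
    using assms by auto
  then have "card {B \<in> \<B>. minimal_in V E x W B} \<le> card (\<B> - {B\<^sub>1, B\<^sub>2})"
    using assms(1) by (intro card_mono) auto
  also have "\<dots> = card \<B> - 2"
    using assms(1,3,4) \<open>B\<^sub>1 \<noteq> B\<^sub>2\<close> by (subst card_Diff_subset) auto
  finally have "card {B \<in> \<B>. minimal_in V E x W B} \<le> card \<B> - 2" .
  moreover have "card {B\<^sub>1, B\<^sub>2} \<le> card \<B>"
    using assms(1,3,4) by (intro card_mono) auto
  ultimately show False
    using assms(2) \<open>B\<^sub>1 \<noteq> B\<^sub>2\<close> unfolding removable_def by simp
qed

lemma notmin_within_block:
  assumes "finite \<B>" "\<A> \<sqsubseteq> \<B>" "removable V E x W \<B>"
  shows "notmin V E x W \<A> = {} \<or> (\<exists>B\<in>\<B>. notmin V E x W \<A> \<subseteq> B)"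
proof (cases "notmin V E x W \<A> = {}")
  case False
  have nonminimal_block: "\<exists>B\<in>\<B>. A \<subseteq> B \<and> \<not> minimal_in V E x W B"
    if "A \<in> \<A>" "\<not> minimal_in V E x W A" for A
  proof -
    from that(1) assms(2) obtain B where "B \<in> \<B>" "A \<subseteq> B"
      unfolding refines_def by blast
    with that(2) minimal_in_antimono[of V E x W B A] show ?thesis
      by blast
  qed
  from False obtain A\<^sub>0 where "A\<^sub>0 \<in> \<A>" "\<not> minimal_in V E x W A\<^sub>0"
    unfolding notmin_def by blast
  then obtain B\<^sub>0 where B\<^sub>0: "B\<^sub>0 \<in> \<B>" "\<not> minimal_in V E x W B\<^sub>0"
    using nonminimal_block by blast
  have "A \<subseteq> B\<^sub>0" if "A \<in> \<A>" "\<not> minimal_in V E x W A" for A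
  proof -
    from nonminimal_block[OF that] obtain B
      where "B \<in> \<B>" "A \<subseteq> B" "\<not> minimal_in V E x W B"
      by blast
    with removable_nonminimal_unique[OF assms(1,3)] B\<^sub>0 show ?thesis
      by blast
  qed
  then show ?thesis
    using B\<^sub>0(1) unfolding notmin_def by blast
qed simp

lemma merge_blocks_empty: "merge_blocks \<A> {} = \<A>"
proof (cases "{} \<in> \<A>")
  case True
  then have "{A \<in> \<A>. A \<subseteq> {}} = {{}}"
    by auto
  with True show ?thesis
    unfolding merge_blocks_def by auto
next
  case False
  then have "{A \<in> \<A>. A \<subseteq> {}} = {}"
    by auto
  then show ?thesis
    unfolding merge_blocks_def by simp
qed

lemma merge_blocks_refines:
  assumes "\<A> \<sqsubseteq> \<B>" "B \<in> \<B>" "M \<subseteq> B"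
  shows "merge_blocks \<A> M \<sqsubseteq> \<B>"
proof -
  have "\<Union>{A \<in> \<A>. A \<subseteq> M} \<subseteq> B"
    using assms(3) by blast
  with assms(1,2) show ?thesis
    unfolding merge_blocks_def refines_def by auto
qed

lemma merge_blocks_nbhd_closed:
  assumes "\<And>A. A \<in> \<A> \<Longrightarrow> nbhd_closed V E A" "A \<in> merge_blocks \<A> M"
  shows "nbhd_closed V E A"
proof -
  have "A \<in> \<A> \<or> A = \<Union>{A \<in> \<A>. A \<subseteq> M}"
    using assms(2) unfolding merge_blocks_def by (auto split: if_splits)
  with assms(1) show ?thesis
    using nbhd_closed_Union[of "{A \<in> \<A>. A \<subseteq> M}"] by blast
qed

lemma CC_nbhd_closed:
  assumes "A \<in> CC V E"
  shows "nbhd_closed V E A"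
proof -
  from assms obtain u where A: "A = {v \<in> V. reach V E u v}"
    unfolding CC_def by blast
  have "reach V E u y" if "reach V E u v" "v \<in> V" "y \<in> nbhd V E v" for v y
    using that unfolding reach_def nbhd_def by (auto intro: rtranclp.rtrancl_into_rtrancl)
  then show ?thesis
    unfolding A nbhd_closed_def by (auto simp: nbhd_def)
qed

lemma Aseq_nbhd_closed: "A \<in> Aseq V E X P i \<Longrightarrow> nbhd_closed (V - X) E A"
proof (induction i arbitrary: A)
  case 0
  then show ?case
    by (simp add: CC_nbhd_closed)
next
  case (Suc i)
  then show ?case
    by (intro merge_blocks_nbhd_closed[OF Suc.IH]) simp_all
qed

lemma good_permutation_remaining:
  assumes "good_permutation V E X \<B> P"
  shows "X - set (take i P) = set (drop i P)"
proof -
  have "set P = set (take i P) \<union> set (drop i P)"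
    by (metis append_take_drop_id set_append)
  then show ?thesis
    using assms set_take_disj_set_drop_if_distinct[of P i i]
    by (auto simp: good_permutation_def)
qed

lemma Aseq_refines:
  assumes "finite \<B>" "CC (V - X) E \<sqsubseteq> \<B>" "good_permutation V E X \<B> P" "i \<le> length P"
  shows "Aseq V E X P i \<sqsubseteq> \<B>"
  using assms(4)
proof (induction i)
  case 0
  then show ?case
    using assms(2) by simp
next
  case (Suc i)
  then have IH: "Aseq V E X P i \<sqsubseteq> \<B>"
    by simp
  have "removable V E (P ! i) (X - set (take i P)) \<B>"
    using assms(3) Suc.prems
    by (simp add: good_permutation_remaining[OF assms(3)] good_permutation_def)
  with notmin_within_block[OF assms(1) IH]
  consider "notmin V E (P ! i) (X - set (take i P)) (Aseq V E X P i) = {}"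
    | B where "B \<in> \<B>" "notmin V E (P ! i) (X - set (take i P)) (Aseq V E X P i) \<subseteq> B"
    by blast
  then show ?case
    by cases (simp_all add: IH merge_blocks_empty merge_blocks_refines[OF IH])
qed

lemma finite_partition:
  assumes "finite S" "is_partition \<B> S"
  shows "finite \<B>"
proof -
  have "\<B> \<subseteq> Pow S"
    using assms(2) by (auto simp: is_partition_def)
  with assms(1) show ?thesis
    by (simp add: finite_subset)
qed

lemma X_interval_notmin:
  assumes "good_partition V E X \<B>" "finite \<B>" "\<A> \<sqsubseteq> \<B>"
    and "\<And>A. A \<in> \<A> \<Longrightarrow> nbhd_closed (V - X) E A" and "removable V E x W \<B>"
  shows "X_interval (X \<union> notmin V E x W \<A>) E X"
  using notmin_within_block[OF assms(2,3,5)]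
proof
  assume "notmin V E x W \<A> = {}"
  moreover have "is_clique X E X"
    using assms(1) by (auto simp: good_partition_def max_clique_def intro: is_clique_subset)
  ultimately show ?thesis
    by (simp add: X_interval_clique)
next
  let ?M = "notmin V E x W \<A>"
  assume "\<exists>B\<in>\<B>. ?M \<subseteq> B"
  then obtain B where B: "B \<in> \<B>" "?M \<subseteq> B" ..
  with assms(1) have "X_interval (X \<union> B) E X" "B \<subseteq> V - X"
    by (auto simp: good_partition_def is_partition_def)
  moreover have "nbhd_closed (V - X) E ?M"
    unfolding notmin_def using assms(4) by (auto intro: nbhd_closed_Union)
  moreover have "X \<union> B - X = B" "X \<union> ?M - X = ?M"
    using B(2) \<open>B \<subseteq> V - X\<close> by blast+
  ultimately show ?thesis
    using B(2) X_interval_restrict[of "X \<union> B" E X "X \<union> ?M"] nbhd_closed_subset[of "V - X" E ?M]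
    by auto
qed

theorem lemma4:
  fixes V :: "'a set" and E :: "'a \<Rightarrow> 'a \<Rightarrow> bool"
  assumes "simple_graph V E"
    and "good_partition V E X \<B>"
    and "good_permutation V E X \<B> P"
  shows "\<forall>i\<in>{1..length P}. Aseq V E X P i \<sqsubseteq> \<B> \<and>
           X_interval (X \<union> notmin V E (P ! (i - 1)) (set (drop (i - 1) P)) (Aseq V E X P (i - 1))) E X"
proof
  have finite_B: "finite \<B>"
    using assms(1,2) finite_partition[of "V - X" \<B>]
    by (simp add: simple_graph_def good_partition_def)
  have components: "CC (V - X) E \<sqsubseteq> \<B>"
    using assms(2) by (simp add: good_partition_def)
  fix i assume "i \<in> {1..length P}"
  then obtain k where k: "i = Suc k" "k < length P"
    by (cases i) auto
  have "removable V E (P ! k) (set (drop k P)) \<B>"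
    using assms(3) k(2) by (simp add: good_permutation_def)
  then have "X_interval (X \<union> notmin V E (P ! k) (set (drop k P)) (Aseq V E X P k)) E X"
    using Aseq_refines[OF finite_B components assms(3)] k(2)
    by (intro X_interval_notmin[OF assms(2) finite_B _ Aseq_nbhd_closed]) simp_all
  moreover have "Aseq V E X P i \<sqsubseteq> \<B>"
    using k by (intro Aseq_refines[OF finite_B components assms(3)]) simp
  ultimately show "Aseq V E X P i \<sqsubseteq> \<B> \<and>
      X_interval (X \<union> notmin V E (P ! (i - 1)) (set (drop (i - 1) P)) (Aseq V E X P (i - 1))) E X"
    using k(1) by simp
qed

end
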